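(* Consider the minimal I-MAP MCMC algorithm on $p$ variables: start from $\pi_0\in S_p$ and compute $\hat G_{\pi_0}$ from all required CI tests; for $t=1,\dots,T$ propose $\pi_t$ from the adjacent-transposition proposal $q$ (stay with probability $s\in(0,1)$, move to each permutation differing by one adjacent transposition with probability $(1-s)/p$), compute $\hat G_{\pi_t}$ from $\hat G_{\pi_{t-1}}$ by the update rule below, accept/reject by the Metropolis–Hastings rule with acceptance probability $\min\{1,\exp(\ell(\pi_t)-\ell(\pi_{t-1}))\}$, $\ell(\pi)=\log(\mathbb P(D\mid\hat G_\pi)\mathbb P(\hat G_\pi))$, and store the current DAG (as a $p\times p$ adjacency matrix) every $\lceil 1/\kappa\rceil$ iterations, where $\kappa\in(0,1]$ is the thinning rate. Update rule: if the transposition swaps the first and last positions, recompute $\hat G_{\pi_t}$ from scratch; otherwise, if positions $k,k+1$ are swapped, copy $\hat G_{\pi_{t-1}}$, reverse the edge between the two swapped nodes if present, and for each $s<k$ and each of the two swapped nodes recompute the single CI test determining the edge between $\pi_t(s)$ and that node. Assume each CI test (computing a partial correlation) costs $O(p^3)$ time. Then the algorithm uses $O(\kappa T p^2)$ memory and has average (expected over the proposal) time complexity $O(Tp^4+p^5)$.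
   Context: An adjacent transposition of $\pi$ swaps positions $k,k+1$ ($1\le k\le p-1$) or positions $1$ and $p$. The minimal I-MAP $\hat G_\pi$ is the DAG on $[p]$ with an arrow $\pi(i)\to\pi(j)$ ($i<j$) iff the CI test of $X_{\pi(i)}\perp X_{\pi(j)}\mid X_S$ with $S=\{\pi(1),\dots,\pi(j-1)\}\setminus\{\pi(i)\}$ rejects independence; computing it from scratch requires $O(p^2)$ CI tests. *)

theory Defs
  imports "HOL-Probability.Probability"
begin

text \<open>Variables are 0..p-1,
  a permutation is a list that is a rearrangement of [0..<p]; positions are 0-indexed.
  A DAG is a set of directed edges (its p x p adjacency matrix).
  ci x y S = True means the CI test of X_x independent of X_y given X_S rejects independence.\<close>

type_synonym graph = "(nat \<times> nat) set"

datatype move = Stay | Adj nat | Wrap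

definition proposal :: "nat \<Rightarrow> real \<Rightarrow> move pmf" where
  "proposal p s = bind_pmf (bernoulli_pmf s)
     (\<lambda>b. if b then return_pmf Stay else pmf_of_set (insert Wrap (Adj ` {..<p - 1})))"

fun apply_move :: "move \<Rightarrow> nat list \<Rightarrow> nat list" where
  "apply_move Stay \<pi> = \<pi>"
| "apply_move (Adj k) \<pi> = \<pi>[k := \<pi> ! (k + 1), k + 1 := \<pi> ! k]"
| "apply_move Wrap \<pi> = \<pi>[0 := \<pi> ! (length \<pi> - 1), length \<pi> - 1 := \<pi> ! 0]"

definition imap :: "(nat \<Rightarrow> nat \<Rightarrow> nat set \<Rightarrow> bool) \<Rightarrow> nat list \<Rightarrow> graph" where
  "imap ci \<pi> = {(\<pi> ! i, \<pi> ! j) | i j. i < j \<and> j < length \<pi> \<and>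
      ci (\<pi> ! i) (\<pi> ! j) (set (take j \<pi>) - {\<pi> ! i})}"

fun update :: "(nat \<Rightarrow> nat \<Rightarrow> nat set \<Rightarrow> bool) \<Rightarrow> nat list \<Rightarrow> graph \<Rightarrow> move \<Rightarrow> graph" where
  "update ci \<pi>' G Stay = G"
| "update ci \<pi>' G Wrap = imap ci \<pi>'"
| "update ci \<pi>' G (Adj k) =
    (let a = \<pi>' ! k; b = \<pi>' ! (k + 1);
         G1 = (G - {(a, b), (b, a)}) \<union> {(y, x) | x y. (x, y) \<in> G \<inter> {(a, b), (b, a)}}
     in {e \<in> G1. \<not> (\<exists>i<k. e = (\<pi>' ! i, a) \<or> e = (\<pi>' ! i, b))}
        \<union> {(\<pi>' ! i, \<pi>' ! j) | i j. i < k \<and> (j = k \<or> j = k + 1) \<and>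
              ci (\<pi>' ! i) (\<pi>' ! j) (set (take j \<pi>') - {\<pi>' ! i})})"

text \<open>Time cost of the update (cci = cost of one CI test); copying/writing the
  p x p adjacency matrix costs p^2.\<close>
fun update_cost :: "nat \<Rightarrow> real \<Rightarrow> move \<Rightarrow> real" where
  "update_cost p cci Stay = real p ^ 2"
| "update_cost p cci Wrap = real p ^ 2 + real (p * (p - 1) div 2) * cci"
| "update_cost p cci (Adj k) = real p ^ 2 + 2 * real k * cci"

record state =
  perm :: "nat list"
  graph :: graph
  samples :: "graph list"
  time :: real

definition thin :: "real \<Rightarrow> nat" where
  "thin \<kappa> = nat \<lceil>1 / \<kappa>\<rceil>"

definition init_state :: "(nat \<Rightarrow> nat \<Rightarrow> nat set \<Rightarrow> bool) \<Rightarrow> nat \<Rightarrow> real \<Rightarrow> nat list \<Rightarrow> state" where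
  "init_state ci p cci \<pi>0 =
     \<lparr>perm = \<pi>0, graph = imap ci \<pi>0, samples = [],
      time = real p ^ 2 + real (p * (p - 1) div 2) * cci\<rparr>"

text \<open>Iteration t: propose, update graph, evaluate score (cost csc), MH accept/reject
  (unit cost), store the current DAG if t is a multiple of ceil(1/kappa) (cost p^2).\<close>
definition mh_step :: "(nat \<Rightarrow> nat \<Rightarrow> nat set \<Rightarrow> bool) \<Rightarrow> (graph \<Rightarrow> real) \<Rightarrow> nat \<Rightarrow> real \<Rightarrow> real
     \<Rightarrow> real \<Rightarrow> real \<Rightarrow> nat \<Rightarrow> state \<Rightarrow> state pmf" where
  "mh_step ci L p s \<kappa> cci csc t st =
     bind_pmf (proposal p s) (\<lambda>m.
       let \<pi>' = apply_move m (perm st);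
           G' = update ci \<pi>' (graph st) m
       in bind_pmf (bernoulli_pmf (min 1 (exp (L G' - L (graph st))))) (\<lambda>acc.
         let \<pi>n = (if acc then \<pi>' else perm st);
             Gn = (if acc then G' else graph st);
             store = (t mod thin \<kappa> = 0)
         in return_pmf
           \<lparr>perm = \<pi>n, graph = Gn,
            samples = (if store then samples st @ [Gn] else samples st),
            time = time st + update_cost p cci m + csc + 1 + (if store then real p ^ 2 else 0)\<rparr>))"

fun run :: "(nat \<Rightarrow> nat \<Rightarrow> nat set \<Rightarrow> bool) \<Rightarrow> (graph \<Rightarrow> real) \<Rightarrow> nat \<Rightarrow> real \<Rightarrow> real
     \<Rightarrow> real \<Rightarrow> real \<Rightarrow> nat list \<Rightarrow> nat \<Rightarrow> state pmf" where
  "run ci L p s \<kappa> cci csc \<pi>0 0 = return_pmf (init_state ci p cci \<pi>0)"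
| "run ci L p s \<kappa> cci csc \<pi>0 (Suc t) =
     bind_pmf (run ci L p s \<kappa> cci csc \<pi>0 t) (mh_step ci L p s \<kappa> cci csc (Suc t))"

definition memory :: "nat \<Rightarrow> state \<Rightarrow> real" where
  "memory p st = real (length (samples st)) * real p ^ 2"

end

theory Submission imports Defs begin

text \<open>In expectation over the proposal, an iteration copies the p x p adjacency matrix and
  performs fewer than 3p CI tests: the wrap-around move needs p(p-1)/2 tests and the adjacent
  transposition at position k needs 2k, so the average over the p non-trivial moves is
  (p(p-1)/2 + 2(0 + ... + (p-2)))/p < 3p. With CI tests of cost O(p^3) and score evaluations of
  cost O(p^4), T iterations plus the initial p(p-1)/2 tests cost O(Tp^4 + p^5). The memory is
  T div \<lceil>1/\<kappa>\<rceil> \<le> \<kappa>T stored adjacency matrices.\<close>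

lemma half_pairs_le_square: "real (p * (p - 1) div 2) \<le> real p ^ 2"
proof -
  have "p * (p - 1) div 2 \<le> p * p"
    by (meson diff_le_self div_le_dividend le_trans mult_le_mono2)
  then show ?thesis by (metis of_nat_le_iff of_nat_mult power2_eq_square)
qed

lemma card_nontrivial_moves:
  assumes "p \<ge> 1"
  shows "card (insert Wrap (Adj ` {..<p - 1})) = p"
  using assms by (subst card_insert_disjoint) (auto simp: card_image inj_on_def)

lemma set_pmf_proposal: "set_pmf (proposal p s) \<subseteq> insert Stay (insert Wrap (Adj ` {..<p - 1}))"
  unfolding proposal_def by (auto simp: set_bind_pmf split: if_splits)

lemma expectation_proposal:
  fixes f :: "move \<Rightarrow> real"
  assumes "p \<ge> 1" "0 \<le> s" "s \<le> 1"
  shows "measure_pmf.expectation (proposal p s) f =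
    s * f Stay + (1 - s) * ((\<Sum>m \<in> insert Wrap (Adj ` {..<p - 1}). f m) / real p)"
  unfolding proposal_def
  using assms card_nontrivial_moves[OF assms(1)]
  by (subst pmf_expectation_bind[where A = UNIV]) (auto simp: UNIV_bool integral_pmf_of_set)

lemma sum_update_cost_nontrivial_moves:
  assumes "p \<ge> 1" "0 \<le> cci"
  shows "(\<Sum>m \<in> insert Wrap (Adj ` {..<p - 1}). update_cost p cci m)
    \<le> real p * (real p ^ 2 + 3 * real p * cci)"
proof -
  have adj: "(\<Sum>k<p - 1. update_cost p cci (Adj k)) \<le> (\<Sum>k<p - 1. real p ^ 2 + 2 * real p * cci)"
    using assms by (intro sum_mono) (auto intro!: mult_right_mono)
  have wrap: "update_cost p cci Wrap \<le> real p ^ 2 + real p ^ 2 * cci"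
    using mult_right_mono[OF half_pairs_le_square assms(2)] by simp
  have "(\<Sum>m \<in> insert Wrap (Adj ` {..<p - 1}). update_cost p cci m)
      = update_cost p cci Wrap + (\<Sum>k<p - 1. update_cost p cci (Adj k))"
    by (subst sum.insert) (auto simp: sum.reindex inj_on_def)
  also have "\<dots> \<le> (real p ^ 2 + real p ^ 2 * cci) + (real p - 1) * (real p ^ 2 + 2 * real p * cci)"
    using adj wrap assms(1) by (simp add: of_nat_diff)
  also have "\<dots> = real p * (real p ^ 2 + 3 * real p * cci) - 2 * real p * cci"
    by (simp add: algebra_simps power2_eq_square)
  also have "\<dots> \<le> real p * (real p ^ 2 + 3 * real p * cci)"
    using assms by simp
  finally show ?thesis .
qed

lemma expected_update_cost:
  assumes "p \<ge> 1" "0 \<le> s" "s \<le> 1" "0 \<le> cci"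
  shows "measure_pmf.expectation (proposal p s) (\<lambda>m. a + update_cost p cci m)
    \<le> a + real p ^ 2 + 3 * real p * cci"
proof -
  let ?B = "a + real p ^ 2 + 3 * real p * cci"
  have "(\<Sum>m \<in> insert Wrap (Adj ` {..<p - 1}). a + update_cost p cci m) \<le> real p * ?B"
    using sum_update_cost_nontrivial_moves[OF assms(1,4)] card_nontrivial_moves[OF assms(1)]
    by (simp add: sum.distrib algebra_simps)
  then have "(\<Sum>m \<in> insert Wrap (Adj ` {..<p - 1}). a + update_cost p cci m) / real p \<le> ?B"
    using assms(1) by (simp add: divide_le_eq mult.commute)
  moreover have "a + update_cost p cci Stay \<le> ?B"
    using assms by simp
  ultimately show ?thesis
    unfolding expectation_proposal[OF assms(1-3)]
    using assms(2,3) by (intro convex_bound_le) auto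
qed

lemma time_mh_step:
  "map_pmf time (mh_step ci L p s \<kappa> cci csc t st) =
   map_pmf (\<lambda>m. time st + csc + 1 + (if t mod thin \<kappa> = 0 then real p ^ 2 else 0)
                + update_cost p cci m) (proposal p s)"
  unfolding mh_step_def map_bind_pmf Let_def
  by (simp add: map_pmf_def[symmetric] algebra_simps)

lemma expected_time_mh_step:
  assumes "p \<ge> 1" "0 \<le> s" "s \<le> 1" "0 \<le> cci"
  shows "measure_pmf.expectation (mh_step ci L p s \<kappa> cci csc t st) time
    \<le> time st + (2 * real p ^ 2 + 3 * real p * cci + csc + 1)"
proof -
  have "measure_pmf.expectation (mh_step ci L p s \<kappa> cci csc t st) time
      = measure_pmf.expectation (map_pmf time (mh_step ci L p s \<kappa> cci csc t st)) (\<lambda>x. x)"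
    by simp
  also have "\<dots> \<le> time st + csc + 1 + (if t mod thin \<kappa> = 0 then real p ^ 2 else 0)
                  + real p ^ 2 + 3 * real p * cci"
    unfolding time_mh_step integral_map_pmf by (rule expected_update_cost[OF assms])
  also have "\<dots> \<le> time st + (2 * real p ^ 2 + 3 * real p * cci + csc + 1)"
    by auto
  finally show ?thesis .
qed

lemma finite_set_pmf_mh_step: "finite (set_pmf (mh_step ci L p s \<kappa> cci csc t st))"
proof -
  have "finite (set_pmf (proposal p s))"
    by (rule finite_subset[OF set_pmf_proposal]) auto
  then show ?thesis unfolding mh_step_def Let_def by (auto simp: UNIV_bool)
qed

lemma finite_set_pmf_run: "finite (set_pmf (run ci L p s \<kappa> cci csc \<pi>0 t))"
  by (induction t) (auto simp: finite_set_pmf_mh_step)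

lemma length_samples_run:
  "st \<in> set_pmf (run ci L p s \<kappa> cci csc \<pi>0 t) \<Longrightarrow> length (samples st) = t div thin \<kappa>"
proof (induction t arbitrary: st)
  case 0
  then show ?case by (simp add: init_state_def)
next
  case (Suc t)
  then obtain st0 where st0: "st0 \<in> set_pmf (run ci L p s \<kappa> cci csc \<pi>0 t)"
    and st: "st \<in> set_pmf (mh_step ci L p s \<kappa> cci csc (Suc t) st0)"
    by auto
  have "length (samples st) = length (samples st0) + (if Suc t mod thin \<kappa> = 0 then 1 else 0)"
    using st unfolding mh_step_def Let_def by (auto split: if_splits)
  then show ?case using Suc.IH[OF st0] by (simp add: div_Suc)
qed

lemma div_thin_le:
  assumes "0 < \<kappa>"
  shows "real (T div thin \<kappa>) \<le> \<kappa> * real T"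
proof -
  have "1 / \<kappa> \<le> real (thin \<kappa>)"
    unfolding thin_def using assms le_of_int_ceiling[of "1 / \<kappa>"] by linarith
  then have inv_le: "1 / real (thin \<kappa>) \<le> \<kappa>"
    using assms by (simp add: divide_simps mult.commute)
  have "real (T div thin \<kappa>) \<le> real T / real (thin \<kappa>)"
    by (rule of_nat_div_le_of_nat)
  also have "\<dots> \<le> \<kappa> * real T"
    using mult_left_mono[OF inv_le, of "real T"] by (simp add: mult.commute)
  finally show ?thesis .
qed

lemma expected_time_run:
  assumes "p \<ge> 1" "0 \<le> s" "s \<le> 1" "0 \<le> cci"
  shows "measure_pmf.expectation (run ci L p s \<kappa> cci csc \<pi>0 t) time
    \<le> (real p ^ 2 + real (p * (p - 1) div 2) * cci)
       + real t * (2 * real p ^ 2 + 3 * real p * cci + csc + 1)"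
proof (induction t)
  case 0
  then show ?case by (simp add: init_state_def)
next
  case (Suc t)
  define R where "R = run ci L p s \<kappa> cci csc \<pi>0 t"
  define B where "B = 2 * real p ^ 2 + 3 * real p * cci + csc + 1"
  have fin: "finite (set_pmf R)"
    unfolding R_def by (rule finite_set_pmf_run)
  have "measure_pmf.expectation (run ci L p s \<kappa> cci csc \<pi>0 (Suc t)) time
      = (\<Sum>a \<in> set_pmf R. pmf R a * measure_pmf.expectation (mh_step ci L p s \<kappa> cci csc (Suc t) a) time)"
    unfolding R_def[symmetric] run.simps
    by (subst pmf_expectation_bind[OF fin]) (auto simp: finite_set_pmf_mh_step)
  also have "\<dots> \<le> (\<Sum>a \<in> set_pmf R. pmf R a * (time a + B))"
    unfolding B_def
    by (intro sum_mono mult_left_mono expected_time_mh_step[OF assms] pmf_nonneg)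
  also have "\<dots> = (\<Sum>a \<in> set_pmf R. time a * pmf R a) + B * (\<Sum>a \<in> set_pmf R. pmf R a)"
    by (simp add: algebra_simps sum.distrib sum_distrib_left)
  also have "(\<Sum>a \<in> set_pmf R. pmf R a) = 1"
    using fin by (intro sum_pmf_eq_1) auto
  also have "(\<Sum>a \<in> set_pmf R. time a * pmf R a) = measure_pmf.expectation R time"
    using fin by (intro integral_measure_pmf_real[symmetric]) auto
  finally show ?case
    using Suc.IH unfolding R_def B_def by (simp add: algebra_simps)
qed

lemma expected_time_run_polynomial:
  assumes p: "p \<ge> 2" and s: "0 \<le> s" "s \<le> 1" and c0: "0 \<le> c0"
    and cci: "0 \<le> cci" "cci \<le> c0 * real p ^ 3" and csc: "csc \<le> c0 * real p ^ 4"
  shows "measure_pmf.expectation (run ci L p s \<kappa> cci csc \<pi>0 T) time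
    \<le> (4 + 4 * c0) * (real T * real p ^ 4 + real p ^ 5)"
proof -
  have pp: "real p \<ge> 2" using p by simp
  have "real (p * (p - 1) div 2) * cci \<le> real p ^ 2 * (c0 * real p ^ 3)"
    using half_pairs_le_square cci by (intro mult_mono) auto
  moreover have "real p ^ 2 \<le> real p ^ 5"
    using pp by (intro power_increasing) auto
  ultimately have init: "real p ^ 2 + real (p * (p - 1) div 2) * cci \<le> (1 + c0) * real p ^ 5"
    by (simp add: algebra_simps flip: power_add)
  have "3 * real p * cci \<le> 3 * real p * (c0 * real p ^ 3)"
    using cci pp by simp
  moreover have "real p ^ 2 \<le> real p ^ 4" "1 \<le> real p ^ 4"
    using pp by (auto intro: power_increasing simp: one_le_power)
  ultimately have "2 * real p ^ 2 + 3 * real p * cci + csc + 1 \<le> (3 + 4 * c0) * real p ^ 4"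
    using csc by (simp add: algebra_simps power3_eq_cube power4_eq_xxxx)
  from mult_left_mono[OF this, of "real T"]
  have steps: "real T * (2 * real p ^ 2 + 3 * real p * cci + csc + 1)
      \<le> (3 + 4 * c0) * (real T * real p ^ 4)"
    by (simp add: ac_simps)
  have "(1 + c0) * real p ^ 5 + (3 + 4 * c0) * (real T * real p ^ 4)
      \<le> (4 + 4 * c0) * (real T * real p ^ 4 + real p ^ 5)"
    using c0 by (simp add: algebra_simps)
  then show ?thesis
    using expected_time_run[OF _ s cci(1), of p ci L \<kappa> csc \<pi>0 T] p init steps by linarith
qed

theorem proposition2:
  fixes c0 :: real
  shows "\<exists>C::real. \<forall>p s \<kappa> T ci L cci csc \<pi>0.
    p \<ge> 2 \<longrightarrow> 0 < s \<longrightarrow> s < 1 \<longrightarrow> 0 < \<kappa> \<longrightarrow> \<kappa> \<le> 1 \<longrightarrow>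
    distinct \<pi>0 \<longrightarrow> set \<pi>0 = {..<p} \<longrightarrow>
    0 \<le> cci \<longrightarrow> cci \<le> c0 * real p ^ 3 \<longrightarrow>
    0 \<le> csc \<longrightarrow> csc \<le> c0 * real p ^ 4 \<longrightarrow>
    (\<forall>st \<in> set_pmf (run ci L p s \<kappa> cci csc \<pi>0 T). memory p st \<le> C * (\<kappa> * real T * real p ^ 2))
    \<and> measure_pmf.expectation (run ci L p s \<kappa> cci csc \<pi>0 T) time
        \<le> C * (real T * real p ^ 4 + real p ^ 5)"
proof (intro exI[of _ "4 + 4 * \<bar>c0\<bar>"] allI impI conjI ballI)
  fix p T :: nat and s \<kappa> cci csc :: real and ci L and \<pi>0 :: "nat list" and st :: state
  assume p: "p \<ge> 2" and s: "0 < s" "s < 1" and \<kappa>: "0 < \<kappa>"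
    and cci: "0 \<le> cci" "cci \<le> c0 * real p ^ 3" and csc: "csc \<le> c0 * real p ^ 4"
  have "0 < real p ^ 3" using p by simp
  then have c0: "0 \<le> c0"
    using cci by (smt (verit) mult_neg_pos)
  show "measure_pmf.expectation (run ci L p s \<kappa> cci csc \<pi>0 T) time
      \<le> (4 + 4 * \<bar>c0\<bar>) * (real T * real p ^ 4 + real p ^ 5)"
    using expected_time_run_polynomial[OF p _ _ c0 cci csc] s c0 by simp
  assume "st \<in> set_pmf (run ci L p s \<kappa> cci csc \<pi>0 T)"
  then have "memory p st \<le> \<kappa> * real T * real p ^ 2"
    unfolding memory_def using length_samples_run div_thin_le[OF \<kappa>, of T]
    by (simp add: mult_right_mono)
  also have "\<dots> \<le> (4 + 4 * \<bar>c0\<bar>) * (\<kappa> * real T * real p ^ 2)"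
    using \<kappa> mult_right_mono[of 1 "4 + 4 * \<bar>c0\<bar>" "\<kappa> * real T * real p ^ 2"] by simp
  finally show "memory p st \<le> (4 + 4 * \<bar>c0\<bar>) * (\<kappa> * real T * real p ^ 2)" .
qed

end
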